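(* Let $k$ be a positive integer, $\mathbb{S}=\mathbb{R}/2\pi\mathbb{Z}$, and for $t\in\mathbb{S}$ let $$U_k(t)=\bigl(\cos t,\ \sin t,\ \cos 3t,\ \sin 3t,\ \ldots,\ \cos(2k-1)t,\ \sin(2k-1)t\bigr)\in\mathbb{R}^{2k}.$$ Let $t_1,\ldots,t_{2k}\in\mathbb{S}$ be distinct points no two of which are antipodal (i.e. $t_i\neq t_j+\pi \pmod{2\pi}$ for all $i,j$). Then the vectors $U_k(t_1),\ldots,U_k(t_{2k})$ are linearly independent. *)

theory Defs
  imports Complex_Main
begin

text \<open>The curve U_k : S -> R^(2k), with R^(2k) rendered as functions nat => real whose
  relevant components are those with index j < 2k.\<close>
definition U :: "nat \<Rightarrow> real \<Rightarrow> (nat \<Rightarrow> real)" where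
  "U k t = (\<lambda>j. if j < 2 * k then
                   (if even j then cos (real (2 * (j div 2) + 1) * t)
                              else sin (real (2 * (j div 2) + 1) * t))
                 else 0)"

definition lin_indep_family :: "nat \<Rightarrow> nat \<Rightarrow> (nat \<Rightarrow> nat \<Rightarrow> real) \<Rightarrow> bool" where
  "lin_indep_family d n v \<longleftrightarrow>
     (\<forall>c :: nat \<Rightarrow> real. (\<forall>j<d. (\<Sum>i<n. c i * v i j) = 0) \<longrightarrow> (\<forall>i<n. c i = 0))"

end

theory Submission
  imports Defs
begin

text \<open>Fix \<open>i\<^sub>0\<close>. The product \<open>p(x) = \<Prod>\<^sub>j\<^sub>\<noteq>\<^sub>i\<^sub>0 sin (x - t\<^sub>j)\<close> of \<open>2k - 1\<close> factors is a
  trigonometric polynomial of degree \<open>2k - 1\<close> containing only odd harmonics, because multiplying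
  by \<open>sin (x - s)\<close> raises the degree by one and flips the parity of every harmonic. The
  components of \<open>U\<^sub>k\<close> are exactly these harmonics, so \<open>p(x) = \<langle>a, U\<^sub>k(x)\<rangle>\<close> for a fixed vector
  \<open>a\<close>. This functional vanishes at \<open>U\<^sub>k(t\<^sub>j)\<close> for \<open>j \<noteq> i\<^sub>0\<close>, but not at \<open>U\<^sub>k(t\<^sub>i\<^sub>0)\<close>, since
  \<open>sin (t\<^sub>i\<^sub>0 - t\<^sub>j) = 0\<close> would make \<open>t\<^sub>i\<^sub>0\<close> and \<open>t\<^sub>j\<close> equal or antipodal. So every
  coefficient of a vanishing combination of the \<open>U\<^sub>k(t\<^sub>i)\<close> is zero.\<close>

lemma lin_indep_family_if_separating_functionals:
  assumes "\<And>i0. i0 < n \<Longrightarrow> \<exists>a. (\<Sum>j<d. a j * v i0 j) \<noteq> 0 \<and>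
                               (\<forall>i<n. i \<noteq> i0 \<longrightarrow> (\<Sum>j<d. a j * v i j) = 0)"
  shows "lin_indep_family d n v"
  unfolding lin_indep_family_def
proof (intro allI impI)
  fix c :: "nat \<Rightarrow> real" and i0
  assume c: "\<forall>j<d. (\<Sum>i<n. c i * v i j) = 0" and i0: "i0 < n"
  obtain a where a_i0: "(\<Sum>j<d. a j * v i0 j) \<noteq> 0"
    and a_other: "\<And>i. i < n \<Longrightarrow> i \<noteq> i0 \<Longrightarrow> (\<Sum>j<d. a j * v i j) = 0"
    using assms[OF i0] by blast
  have "0 = (\<Sum>j<d. a j * (\<Sum>i<n. c i * v i j))"
    using c by simp
  also have "\<dots> = (\<Sum>i<n. c i * (\<Sum>j<d. a j * v i j))"
    by (simp add: sum_distrib_left sum.swap[of _ "{..<n}"] mult.left_commute)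
  also have "\<dots> = c i0 * (\<Sum>j<d. a j * v i0 j)"
    using i0 a_other by (simp add: sum.remove[of "{..<n}" i0])
  finally show "c i0 = 0"
    using a_i0 by simp
qed

lemma sin_eq_0_iff_mod_2pi:
  "sin x = 0 \<longleftrightarrow> (\<exists>m::int. x = 2 * pi * m) \<or> (\<exists>m::int. x = pi + 2 * pi * m)"
proof
  assume "sin x = 0"
  then obtain n :: int where n: "x = n * pi"
    by (auto simp: sin_zero_iff_int2)
  show "(\<exists>m::int. x = 2 * pi * m) \<or> (\<exists>m::int. x = pi + 2 * pi * m)"
  proof (cases "even n")
    case True
    then obtain m where "n = 2 * m" by blast
    then show ?thesis using n by auto
  next
    case False
    then obtain m where "n = 2 * m + 1" using oddE by blast
    then show ?thesis using n by (auto simp: algebra_simps)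
  qed
next
  assume "(\<exists>m::int. x = 2 * pi * m) \<or> (\<exists>m::int. x = pi + 2 * pi * m)"
  then show "sin x = 0"
  proof
    assume "\<exists>m::int. x = 2 * pi * m"
    then obtain m :: int where "x = of_int (2 * m) * pi" by auto
    then show ?thesis unfolding sin_zero_iff_int2 by blast
  next
    assume "\<exists>m::int. x = pi + 2 * pi * m"
    then obtain m :: int where "x = of_int (2 * m + 1) * pi" by (auto simp: algebra_simps)
    then show ?thesis unfolding sin_zero_iff_int2 by blast
  qed
qed

text \<open>The phase \<open>\<phi>\<close> lets a single rule produce both \<open>cos (j t)\<close> and \<open>sin (j t)\<close>.\<close>

inductive_set same_parity_trig_poly :: "nat \<Rightarrow> (real \<Rightarrow> real) set" for N :: nat where
  harmonic: "j \<le> N \<Longrightarrow> even (N + j) \<Longrightarrow> (\<lambda>t. cos (real j * t - \<phi>)) \<in> same_parity_trig_poly N"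
| add: "f \<in> same_parity_trig_poly N \<Longrightarrow> g \<in> same_parity_trig_poly N \<Longrightarrow>
          (\<lambda>t. f t + g t) \<in> same_parity_trig_poly N"
| scale: "f \<in> same_parity_trig_poly N \<Longrightarrow> (\<lambda>t. c * f t) \<in> same_parity_trig_poly N"

lemma same_parity_trig_poly_mult_cos_shift:
  assumes "f \<in> same_parity_trig_poly N"
  shows "(\<lambda>t. f t * cos (t - s)) \<in> same_parity_trig_poly (Suc N)"
  using assms
proof induction
  case (harmonic j \<phi>)
  show ?case
  proof (cases j)
    case 0
    have "(\<lambda>t. cos \<phi> * cos (real 1 * t - s)) \<in> same_parity_trig_poly (Suc N)"
      using harmonic 0 by (intro same_parity_trig_poly.scale same_parity_trig_poly.harmonic) auto
    then show ?thesis
      using 0 by (simp add: mult.commute)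
  next
    case (Suc i)
    have "(\<lambda>t. 1/2 * cos (real i * t - (\<phi> - s)) + 1/2 * cos (real (Suc (Suc i)) * t - (\<phi> + s)))
            \<in> same_parity_trig_poly (Suc N)"
      using harmonic Suc
      by (intro same_parity_trig_poly.add same_parity_trig_poly.scale same_parity_trig_poly.harmonic)
        auto
    moreover have "cos (real j * t - \<phi>) * cos (t - s) =
        1/2 * cos (real i * t - (\<phi> - s)) + 1/2 * cos (real (Suc (Suc i)) * t - (\<phi> + s))" for t
      unfolding cos_times_cos using Suc by (simp add: algebra_simps add_divide_distrib)
    ultimately show ?thesis
      by simp
  qed
next
  case (add f g)
  then show ?case
    using same_parity_trig_poly.add[OF add.IH] by (simp add: distrib_right)
next
  case (scale f c)
  then show ?case
    using same_parity_trig_poly.scale[OF scale.IH, of c] by (simp add: mult.assoc)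
qed

lemma prod_sin_diff_in_same_parity_trig_poly:
  assumes "finite J"
  shows "(\<lambda>x. \<Prod>j\<in>J. sin (x - s j)) \<in> same_parity_trig_poly (card J)"
  using assms
proof induction
  case empty
  have "(\<lambda>x. cos (real 0 * x - 0)) \<in> same_parity_trig_poly 0"
    by (intro same_parity_trig_poly.harmonic) auto
  then show ?case
    by simp
next
  case (insert a J)
  have "sin (x - s a) = cos (x - (s a + pi / 2))" for x
    by (simp add: cos_diff sin_diff cos_add sin_add)
  then show ?case
    using same_parity_trig_poly_mult_cos_shift[OF insert.IH, of "s a + pi / 2"] insert.hyps
    by (simp add: mult.commute)
qed

lemma same_parity_trig_poly_as_U_combination:
  assumes "f \<in> same_parity_trig_poly (2 * k - 1)" and "k \<ge> 1"
  shows "\<exists>a. \<forall>x. f x = (\<Sum>j<2 * k. a j * U k x j)"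
  using assms(1)
proof induction
  case (harmonic j \<phi>)
  have "odd j" and "j \<le> 2 * k - 1"
    using harmonic \<open>k \<ge> 1\<close> by presburger+
  then obtain m where j: "j = 2 * m + 1"
    by (blast elim: oddE)
  with \<open>j \<le> 2 * k - 1\<close> have "m < k"
    by linarith
  define a where "a i = (if i = 2 * m then cos \<phi> else if i = 2 * m + 1 then sin \<phi> else 0)" for i
  have "cos (real j * x - \<phi>) = (\<Sum>i<2 * k. a i * U k x i)" for x
  proof -
    have "(\<Sum>i<2 * k. a i * U k x i) = (\<Sum>i\<in>{2 * m, 2 * m + 1}. a i * U k x i)"
      using \<open>m < k\<close> by (intro sum.mono_neutral_right) (auto simp: a_def)
    also have "\<dots> = cos (real j * x - \<phi>)"
      using \<open>m < k\<close> j by (simp add: a_def U_def cos_diff algebra_simps)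
    finally show ?thesis ..
  qed
  then show ?case
    by blast
next
  case (add f g)
  then obtain a b where "\<forall>x. f x = (\<Sum>j<2 * k. a j * U k x j)" "\<forall>x. g x = (\<Sum>j<2 * k. b j * U k x j)"
    by blast
  then show ?case
    by (intro exI[of _ "\<lambda>j. a j + b j"]) (simp add: distrib_right sum.distrib)
next
  case (scale f c)
  then obtain a where "\<forall>x. f x = (\<Sum>j<2 * k. a j * U k x j)"
    by blast
  then show ?case
    by (intro exI[of _ "\<lambda>j. c * a j"]) (simp add: sum_distrib_left mult.assoc)
qed

theorem lemma2p2:
  fixes k :: nat and t :: "nat \<Rightarrow> real"
  assumes "k \<ge> 1"
    and distinct_mod: "\<And>i j. i < 2 * k \<Longrightarrow> j < 2 * k \<Longrightarrow> i \<noteq> j \<Longrightarrow>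
                         \<not> (\<exists>m::int. t i - t j = 2 * pi * of_int m)"
    and no_antipodal: "\<And>i j. i < 2 * k \<Longrightarrow> j < 2 * k \<Longrightarrow>
                         \<not> (\<exists>m::int. t i - t j = pi + 2 * pi * of_int m)"
  shows "lin_indep_family (2 * k) (2 * k) (\<lambda>i. U k (t i))"
proof (rule lin_indep_family_if_separating_functionals)
  fix i0
  assume i0: "i0 < 2 * k"
  define J where "J = {..<2 * k} - {i0}"
  define p where "p x = (\<Prod>j\<in>J. sin (x - t j))" for x
  have "p \<in> same_parity_trig_poly (2 * k - 1)"
    using prod_sin_diff_in_same_parity_trig_poly[of J t] i0 by (simp add: p_def[abs_def] J_def)
  then obtain a where a: "\<And>x. p x = (\<Sum>j<2 * k. a j * U k x j)"
    using same_parity_trig_poly_as_U_combination \<open>k \<ge> 1\<close> by blast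
  have "sin (t i0 - t j) \<noteq> 0" if "j \<in> J" for j
    using that i0 distinct_mod[of i0 j] no_antipodal[of i0 j] by (auto simp: J_def sin_eq_0_iff_mod_2pi)
  then have "p (t i0) \<noteq> 0"
    by (simp add: p_def J_def)
  moreover have "p (t i) = 0" if "i < 2 * k" "i \<noteq> i0" for i
    using that by (auto simp: p_def J_def intro!: prod_zero bexI[of _ i])
  ultimately show "\<exists>a. (\<Sum>j<2 * k. a j * U k (t i0) j) \<noteq> 0 \<and>
      (\<forall>i<2 * k. i \<noteq> i0 \<longrightarrow> (\<Sum>j<2 * k. a j * U k (t i) j) = 0)"
    by (intro exI[of _ a]) (simp add: a[symmetric])
qed

end
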